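(* Let $\gamma_1,\gamma_2>0$ and consider the birth-death chain RDS $(\theta,\varphi)$ on $\mathbb{N}_0$ described in the context. Let $d\in\mathbb{Z}\setminus\{0\}$ and $I_d:=\{(x,y)\in\mathbb{N}_0^2 : x-y=d\}$. Then for every $(x_0,y_0)\in I_d$, \[ \mathbb{P}\big((\varphi^n_q(x_0),\varphi^n_q(y_0))\in I_d \ \text{for all } n\geq 0\big)=0, \] i.e. the two-point motion $(\varphi^n_q(x_0),\varphi^n_q(y_0))_{n\in\mathbb{N}_0}$ leaves $I_d$ almost surely.
   Context: Noise space: $\mathcal{Q}_+=\{q=(q_n)_{n\in\mathbb{N}_0}: q_n\in[0,1]\}$ with the product Borel $\sigma$-algebra and the product measure $\mathbb{P}=\lambda^{\mathbb{N}_0}$, $\lambda$ Lebesgue measure on $[0,1]$; shift $\theta(q_0,q_1,\dots)=(q_1,q_2,\dots)$. For $q\in\mathcal{Q}_+$ define $f_q:\mathbb{N}_0\to\mathbb{N}_0$ by $f_q(x)=x+1$ if $q_0<\frac{\gamma_1}{\gamma_1+\gamma_2x}$ and $f_q(x)=x-1$ otherwise (the embedded Markov chain of the birth-death reaction network $\emptyset\to\mathcal{S}$ at rate $\gamma_1$, $\mathcal{S}\to\emptyset$ at rate $\gamma_2x$). The cocycle is $\varphi^0_q(x)=x$ and $\varphi^n_q(x)=f_{\theta^{n-1}q}\circ\cdots\circ f_q(x)$ for $n\geq1$. The pair $(\varphi^n_q(x_0),\varphi^n_q(y_0))_n$ with the same $q$ is called the two-point motion. *)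

theory Defs
  imports "HOL-Probability.Probability"
begin

definition noise_space :: "(nat \<Rightarrow> real) measure" where
  "noise_space = PiM (UNIV :: nat set) (\<lambda>_. uniform_measure lborel {0..1::real})"

definition shift :: "(nat \<Rightarrow> real) \<Rightarrow> (nat \<Rightarrow> real)" where
  "shift q = (\<lambda>n. q (Suc n))"

text \<open>One step f_q of the embedded birth-death chain (x - 1 is truncated subtraction on nat;
  the case x = 0 with q 0 >= 1 is a null event).\<close>
definition bd_step :: "real \<Rightarrow> real \<Rightarrow> (nat \<Rightarrow> real) \<Rightarrow> nat \<Rightarrow> nat" where
  "bd_step g1 g2 q x = (if q 0 < g1 / (g1 + g2 * real x) then x + 1 else x - 1)"

fun bd_cocycle :: "real \<Rightarrow> real \<Rightarrow> nat \<Rightarrow> (nat \<Rightarrow> real) \<Rightarrow> nat \<Rightarrow> nat" where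
  "bd_cocycle g1 g2 0 q x = x"
| "bd_cocycle g1 g2 (Suc n) q x = bd_step g1 g2 ((shift ^^ n) q) (bd_cocycle g1 g2 n q x)"

end

theory Submission
  imports Defs
begin

text \<open>
  Let \<open>u y\<close> be the probability that the two-point motion started at \<open>(y + D, y)\<close> keeps the
  distance \<open>D > 0\<close> forever, and let \<open>p y = \<gamma>\<^sub>1 / (\<gamma>\<^sub>1 + \<gamma>\<^sub>2 y)\<close> be the birth probability.
  Keeping the distance forces both points to jump in the same direction, so
  \<open>u y = p (y + D) u (y + 1) + (1 - p y) u (y - 1)\<close>, a recurrence of total mass
  \<open>1 - (p y - p (y + D)) < 1\<close>. Since \<open>p y \<rightarrow> 0\<close>, the motion drifts towards the origin and
  \<open>w y = y + C\<close> is superharmonic for a suitable \<open>C\<close>. As \<open>u - \<epsilon> w\<close> tends to \<open>-\<infinity>\<close>, it attains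
  its maximum, and at a positive maximum the recurrence would be violated; hence
  \<open>u \<le> \<epsilon> w\<close> for every \<open>\<epsilon> > 0\<close>, i.e. \<open>u = 0\<close>.
\<close>

text \<open>At \<open>y = 0\<close> the term \<open>u (y - 1)\<close> is \<open>u 0\<close>; the maximum principle does not need \<open>c 0 = 0\<close>.\<close>

lemma subharmonic_bounded_nonpos:
  fixes u w a c :: "nat \<Rightarrow> real"
  assumes a_nonneg: "\<And>y. 0 \<le> a y" and c_nonneg: "\<And>y. 0 \<le> c y"
    and sub_stochastic: "\<And>y. a y + c y < 1"
    and bounded: "\<And>y. u y \<le> B"
    and u_sub: "\<And>y. u y \<le> a y * u (Suc y) + c y * u (y - 1)"
    and w_super: "\<And>y. a y * w (Suc y) + c y * w (y - 1) \<le> w y"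
    and w_to_top: "filterlim w at_top sequentially"
  shows "u y \<le> 0"
proof -
  have u_le: "u y \<le> e * w y" if e: "e > 0" for e y
  proof (rule ccontr)
    assume "\<not> u y \<le> e * w y"
    define h where "h z = u z - e * w z" for z
    have hy: "h y > 0" using \<open>\<not> u y \<le> e * w y\<close> by (simp add: h_def)
    have "eventually (\<lambda>z. B / e + 1 \<le> w z) sequentially"
      using w_to_top by (simp add: filterlim_at_top)
    then obtain K where K: "\<And>z. z \<ge> K \<Longrightarrow> B / e + 1 \<le> w z"
      by (auto simp: eventually_sequentially)
    have h_neg: "h z < 0" if "z \<ge> K" for z
    proof -
      have "B < e * w z" using K[OF that] e by (simp add: field_simps)
      then show ?thesis using bounded[of z] by (simp add: h_def)
    qed
    obtain m where "m \<in> {..K}" and m_max: "\<And>z. z \<in> {..K} \<Longrightarrow> h z \<le> h m"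
      using Max_in[of "h ` {..K}"] Max_ge[of "h ` {..K}"] by fastforce
    have hm: "h m > 0" using m_max[of y] hy h_neg[of y] by fastforce
    have h_le: "h z \<le> h m" for z
      using m_max[of z] h_neg[of z] hm by (cases "z \<le> K") auto
    have "h m \<le> a m * h (Suc m) + c m * h (m - 1) - e * (w m - (a m * w (Suc m) + c m * w (m - 1)))"
      using u_sub[of m] by (simp add: h_def algebra_simps)
    also have "\<dots> \<le> a m * h (Suc m) + c m * h (m - 1)"
      using w_super[of m] e by simp
    also have "\<dots> \<le> (a m + c m) * h m"
      using h_le[of "Suc m"] h_le[of "m - 1"] a_nonneg[of m] c_nonneg[of m]
      by (simp add: distrib_right add_mono mult_left_mono)
    also have "\<dots> < h m" using sub_stochastic[of m] hm by simp
    finally show False by simp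
  qed
  show "u y \<le> 0"
  proof (rule ccontr)
    assume "\<not> u y \<le> 0"
    define e where "e = u y / (2 * (\<bar>w y\<bar> + 1))"
    have e: "e > 0" using \<open>\<not> u y \<le> 0\<close> by (simp add: e_def add_pos_nonneg)
    have "u y \<le> e * w y" by (rule u_le[OF e])
    also have "\<dots> \<le> e * (\<bar>w y\<bar> + 1)" using e by (intro mult_left_mono) auto
    also have "\<dots> = u y / 2"
      unfolding e_def by (simp add: field_simps add_pos_nonneg)
    finally show False using \<open>\<not> u y \<le> 0\<close> by simp
  qed
qed

lemma linear_superharmonic_function:
  fixes a c :: "nat \<Rightarrow> real"
  assumes a_nonneg: "\<And>y. 0 \<le> a y" and c_nonneg: "\<And>y. 0 \<le> c y"
    and sub_stochastic: "\<And>y. a y + c y < 1"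
    and drift: "\<And>y. N \<le> y \<Longrightarrow> a y \<le> c y"
  obtains C where "\<And>y. a y * (real (Suc y) + C) + c y * (real (y - 1) + C) \<le> real y + C"
proof
  define C where "C = (\<Sum>z\<le>N. a z / (1 - a z - c z))"
  have term_nonneg: "0 \<le> a z / (1 - a z - c z)" for z
    using a_nonneg[of z] sub_stochastic[of z] by simp
  have C_nonneg: "0 \<le> C"
    unfolding C_def using term_nonneg by (simp add: sum_nonneg)
  fix y
  have gap: "0 < 1 - a y - c y" using sub_stochastic[of y] by simp
  show "a y * (real (Suc y) + C) + c y * (real (y - 1) + C) \<le> real y + C"
  proof (cases "y \<le> N")
    case True
    have "a y / (1 - a y - c y) \<le> C"
      unfolding C_def using True term_nonneg by (intro member_le_sum) auto
    then have "a y \<le> (1 - a y - c y) * C" using gap by (simp add: divide_le_eq mult.commute)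
    moreover have "c y * real (y - 1) \<le> c y * real y"
      using c_nonneg[of y] by (intro mult_left_mono) auto
    moreover have "0 \<le> (1 - a y - c y) * real y" using gap by simp
    ultimately show ?thesis by (simp add: algebra_simps)
  next
    case False
    then have "real (y - 1) = real y - 1" by simp
    moreover have "0 \<le> (1 - a y - c y) * (real y + C)" using gap C_nonneg by simp
    ultimately show ?thesis using drift[of y] False by (simp add: algebra_simps)
  qed
qed

lemma (in sequence_space) measure_head_tail:
  assumes A: "A \<in> sets M" and B: "B \<in> sets S"
  shows "measure S {\<omega> \<in> space S. \<omega> 0 \<in> A \<and> (\<lambda>n. \<omega> (Suc n)) \<in> B} = measure M A * measure S B"
proof -
  let ?cons = "\<lambda>(s, \<omega>). case_nat s \<omega>"
  let ?E = "{\<omega> \<in> space S. \<omega> 0 \<in> A \<and> (\<lambda>n. \<omega> (Suc n)) \<in> B}"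
  have "(\<lambda>p. case_nat (fst p) (snd p)) \<in> M \<Otimes>\<^sub>M S \<rightarrow>\<^sub>M S"
    by measurable
  then have cons_measurable: "?cons \<in> M \<Otimes>\<^sub>M S \<rightarrow>\<^sub>M S"
    by (simp add: case_prod_beta')
  have tail_measurable: "(\<lambda>\<omega>. \<lambda>n. \<omega> (Suc n)) \<in> S \<rightarrow>\<^sub>M S"
    by (intro measurable_PiM_single') (auto simp: space_PiM)
  have "?E = ((\<lambda>\<omega>. \<omega> 0) -` A \<inter> space S) \<inter> ((\<lambda>\<omega> n. \<omega> (Suc n)) -` B \<inter> space S)"
    by auto
  also have "\<dots> \<in> sets S"
    by (intro sets.Int measurable_sets[OF _ A] measurable_sets[OF tail_measurable B]) simp
  finally have E: "?E \<in> sets S" .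
  have "?cons -` ?E \<inter> space (M \<Otimes>\<^sub>M S) = A \<times> B"
    using A B[THEN sets.sets_into_space] sets.sets_into_space[OF A]
    by (auto simp: space_pair_measure space_PiM PiE_iff subset_eq split: nat.split)
  then have "emeasure S ?E = emeasure (M \<Otimes>\<^sub>M S) (A \<times> B)"
    by (subst (1) PiM_iter[symmetric]) (simp add: emeasure_distr[OF cons_measurable E])
  also have "\<dots> = emeasure M A * emeasure S B"
    using A B by (intro P.emeasure_pair_measure_Times)
  finally show ?thesis
    by (simp add: measure_def enn2real_mult)
qed

lemma space_noise_space [simp]: "space noise_space = UNIV"
  by (simp add: noise_space_def space_PiM)

lemma prob_space_unit_interval: "prob_space (uniform_measure lborel {0..1::real})"
  by (intro prob_space_uniform_measure) auto

lemma prob_space_noise_space: "prob_space noise_space"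
  unfolding noise_space_def by (intro prob_space_PiM prob_space_unit_interval)

lemma measurable_noise_coordinate [measurable]: "(\<lambda>q. q n) \<in> borel_measurable noise_space"
  unfolding noise_space_def by measurable

lemma measurable_shift [measurable]: "shift \<in> noise_space \<rightarrow>\<^sub>M noise_space"
  unfolding noise_space_def shift_def
  by (intro measurable_PiM_single') (auto simp: space_PiM)

lemma sets_noise_space_head_shift:
  assumes [measurable]: "A \<in> sets borel" "B \<in> sets noise_space"
  shows "{q. q 0 \<in> A \<and> shift q \<in> B} \<in> sets noise_space"
proof -
  have "{q \<in> space noise_space. q 0 \<in> A \<and> shift q \<in> B} \<in> sets noise_space"
    by measurable
  then show ?thesis by simp
qed

lemma measure_noise_space_head_shift:
  assumes "A \<in> sets borel" "B \<in> sets noise_space"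
  shows "measure noise_space {q. q 0 \<in> A \<and> shift q \<in> B}
    = measure (uniform_measure lborel {0..1}) A * measure noise_space B"
proof -
  interpret M: prob_space "uniform_measure lborel {0..1::real}"
    by (rule prob_space_unit_interval)
  interpret sequence_space "uniform_measure lborel {0..1::real}" ..
  have "noise_space = S" by (simp add: noise_space_def)
  then show ?thesis
    using measure_head_tail[of A B] assms by (simp add: shift_def)
qed

lemma measure_noise_space_head_less:
  assumes "0 \<le> p" "p \<le> 1" "B \<in> sets noise_space"
  shows "measure noise_space {q. q 0 < p \<and> shift q \<in> B} = p * measure noise_space B"
proof -
  have "{0..1::real} \<inter> {..<p} = {0..<p}" using assms by auto
  then show ?thesis
    using measure_noise_space_head_shift[of "{..<p}" B] assms by simp
qed

lemma measure_noise_space_head_ge: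
  assumes "0 \<le> p" "p \<le> 1" "B \<in> sets noise_space"
  shows "measure noise_space {q. p \<le> q 0 \<and> shift q \<in> B} = (1 - p) * measure noise_space B"
proof -
  have "{0..1::real} \<inter> {p..} = {p..1}" using assms by auto
  then show ?thesis
    using measure_noise_space_head_shift[of "{p..}" B] assms by simp
qed

lemma shift_funpow: "(shift ^^ n) q = (\<lambda>k. q (k + n))"
  by (induction n arbitrary: q) (auto simp: shift_def)

lemma bd_cocycle_Suc_shift:
  "bd_cocycle g1 g2 (Suc n) q x = bd_cocycle g1 g2 n (shift q) (bd_step g1 g2 q x)"
proof (induction n arbitrary: x)
  case 0
  then show ?case by simp
next
  case (Suc n)
  have "(shift ^^ Suc n) q = (shift ^^ n) (shift q)"
    by (simp only: funpow_Suc_right o_apply)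
  then show ?case using Suc by (simp del: funpow.simps)
qed

lemma measurable_bd_cocycle [measurable]:
  "(\<lambda>q. bd_cocycle g1 g2 n q x) \<in> noise_space \<rightarrow>\<^sub>M count_space UNIV"
proof (induction n)
  case 0
  then show ?case by simp
next
  case (Suc n)
  let ?step = "\<lambda>k q. if q n < g1 / (g1 + g2 * real k) then k + 1 else k - 1"
  have "(\<lambda>q. ?step (bd_cocycle g1 g2 n q x) q) \<in> noise_space \<rightarrow>\<^sub>M count_space UNIV"
    by (rule measurable_compose_countable[OF _ Suc]) measurable
  moreover have "bd_cocycle g1 g2 (Suc n) q x = ?step (bd_cocycle g1 g2 n q x) q" for q
    by (simp add: bd_step_def shift_funpow del: funpow.simps)
  ultimately show ?case by simp
qed

definition birth_prob :: "real \<Rightarrow> real \<Rightarrow> nat \<Rightarrow> real" where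
  "birth_prob g1 g2 x = g1 / (g1 + g2 * real x)"

lemma bd_step_birth_prob:
  "bd_step g1 g2 q x = (if q 0 < birth_prob g1 g2 x then x + 1 else x - 1)"
  by (simp add: bd_step_def birth_prob_def)

context
  fixes g1 g2 :: real
  assumes g1_pos: "g1 > 0" and g2_pos: "g2 > 0"
begin

lemma birth_prob_pos: "0 < birth_prob g1 g2 x"
  using g1_pos g2_pos by (simp add: birth_prob_def add_pos_nonneg)

lemma birth_prob_le_1: "birth_prob g1 g2 x \<le> 1"
  using g1_pos g2_pos by (simp add: birth_prob_def add_pos_nonneg)

lemma birth_prob_strict_antimono: "x < y \<Longrightarrow> birth_prob g1 g2 y < birth_prob g1 g2 x"
  using g1_pos g2_pos unfolding birth_prob_def
  by (intro divide_strict_left_mono) (auto simp: add_pos_nonneg)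

lemma birth_prob_le_half: "g1 \<le> g2 * real x \<Longrightarrow> birth_prob g1 g2 x \<le> 1 / 2"
  using g1_pos g2_pos by (simp add: birth_prob_def add_pos_nonneg divide_le_eq)

end

definition keep_distance :: "real \<Rightarrow> real \<Rightarrow> nat \<Rightarrow> nat \<Rightarrow> nat \<Rightarrow> (nat \<Rightarrow> real) set" where
  "keep_distance g1 g2 D x y = {q. \<forall>n. bd_cocycle g1 g2 n q x = bd_cocycle g1 g2 n q y + D}"

lemma sets_keep_distance: "keep_distance g1 g2 D x y \<in> sets noise_space"
proof -
  have "{q \<in> space noise_space. \<forall>n. bd_cocycle g1 g2 n q x = bd_cocycle g1 g2 n q y + D}
      \<in> sets noise_space"
    by measurable
  then show ?thesis by (simp add: keep_distance_def)
qed

lemma keep_distance_iff_shift: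
  "q \<in> keep_distance g1 g2 D x y \<longleftrightarrow>
     x = y + D \<and> shift q \<in> keep_distance g1 g2 D (bd_step g1 g2 q x) (bd_step g1 g2 q y)"
proof -
  let ?kept = "\<lambda>n. bd_cocycle g1 g2 n q x = bd_cocycle g1 g2 n q y + D"
  have "(\<forall>n. ?kept n) \<longleftrightarrow> ?kept 0 \<and> (\<forall>n. ?kept (Suc n))"
    by (metis not0_implies_Suc)
  then show ?thesis
    unfolding keep_distance_def mem_Collect_eq by (simp only: bd_cocycle_Suc_shift) simp
qed

lemma keep_distance_empty: "x \<noteq> y + D \<Longrightarrow> keep_distance g1 g2 D x y = {}"
  unfolding keep_distance_def by (auto intro: exI[of _ 0])

text \<open>From \<open>(D, 0)\<close> a joint downward step is impossible, since \<open>0 - 1 = 0\<close> on \<open>nat\<close>.\<close>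

lemma keep_distance_split:
  assumes "g1 > 0" "g2 > 0" "D > 0"
  shows "keep_distance g1 g2 D (y + D) y =
     {q. q 0 < birth_prob g1 g2 (y + D) \<and> shift q \<in> keep_distance g1 g2 D (Suc y + D) (Suc y)} \<union>
     {q. 0 < y \<and> birth_prob g1 g2 y \<le> q 0 \<and> shift q \<in> keep_distance g1 g2 D (y - 1 + D) (y - 1)}"
    (is "_ = ?A \<union> ?B")
proof (intro set_eqI)
  fix q :: "nat \<Rightarrow> real"
  have p_less: "birth_prob g1 g2 (y + D) < birth_prob g1 g2 y"
    using birth_prob_strict_antimono assms by simp
  consider (both_up) "q 0 < birth_prob g1 g2 (y + D)"
    | (apart) "birth_prob g1 g2 (y + D) \<le> q 0" "q 0 < birth_prob g1 g2 y"
    | (both_down) "birth_prob g1 g2 y \<le> q 0"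
    by linarith
  then show "q \<in> keep_distance g1 g2 D (y + D) y \<longleftrightarrow> q \<in> ?A \<union> ?B"
  proof cases
    case both_up
    then show ?thesis
      using p_less by (simp add: keep_distance_iff_shift[of q] bd_step_birth_prob)
  next
    case apart
    then show ?thesis
      using \<open>D > 0\<close> by (simp add: keep_distance_iff_shift[of q] bd_step_birth_prob keep_distance_empty)
  next
    case both_down
    show ?thesis
    proof (cases "y = 0")
      case True
      then show ?thesis
        using both_down p_less \<open>D > 0\<close>
        by (simp add: keep_distance_iff_shift[of q] bd_step_birth_prob keep_distance_empty)
    next
      case False
      then have "y + D - 1 = y - 1 + D" by simp
      then show ?thesis
        using both_down p_less False by (simp add: keep_distance_iff_shift[of q] bd_step_birth_prob)
    qed
  qed
qed


lemma measure_keep_distance_recurrence: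
  assumes "g1 > 0" "g2 > 0" "D > 0"
  defines "u \<equiv> \<lambda>y. measure noise_space (keep_distance g1 g2 D (y + D) y)"
  shows "u y = birth_prob g1 g2 (y + D) * u (Suc y)
    + (if y = 0 then 0 else 1 - birth_prob g1 g2 y) * u (y - 1)"
proof -
  interpret prob_space noise_space by (rule prob_space_noise_space)
  let ?A = "{q. q 0 < birth_prob g1 g2 (y + D) \<and> shift q \<in> keep_distance g1 g2 D (Suc y + D) (Suc y)}"
  let ?B = "{q. 0 < y \<and> birth_prob g1 g2 y \<le> q 0 \<and> shift q \<in> keep_distance g1 g2 D (y - 1 + D) (y - 1)}"
  have p_bounds: "0 \<le> birth_prob g1 g2 x" "birth_prob g1 g2 x \<le> 1" for x
    using birth_prob_pos[of g1 g2 x] birth_prob_le_1[of g1 g2 x] assms by auto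
  have "?A \<in> sets noise_space" and "measure noise_space ?A = birth_prob g1 g2 (y + D) * u (Suc y)"
    using sets_noise_space_head_shift[of "{..<birth_prob g1 g2 (y + D)}"]
      measure_noise_space_head_less p_bounds sets_keep_distance by (auto simp: u_def)
  moreover have "?B \<in> sets noise_space \<and>
      measure noise_space ?B = (if y = 0 then 0 else 1 - birth_prob g1 g2 y) * u (y - 1)"
  proof (cases "y = 0")
    case False
    then show ?thesis
      using sets_noise_space_head_shift[of "{birth_prob g1 g2 y..}"]
        measure_noise_space_head_ge p_bounds sets_keep_distance by (auto simp: u_def)
  qed simp
  moreover have "?A \<inter> ?B = {}"
    using birth_prob_strict_antimono[of g1 g2 y "y + D"] assms by auto
  moreover have "keep_distance g1 g2 D (y + D) y = ?A \<union> ?B"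
    by (rule keep_distance_split[OF assms(1-3)])
  ultimately show ?thesis
    by (simp add: u_def finite_measure_Union)
qed


lemma keep_distance_null:
  assumes "g1 > 0" "g2 > 0" "D > 0"
  shows "keep_distance g1 g2 D x y \<in> null_sets noise_space"
proof (cases "x = y + D")
  case False
  then show ?thesis by (simp add: keep_distance_empty)
next
  case True
  interpret prob_space noise_space by (rule prob_space_noise_space)
  define u where "u y = measure noise_space (keep_distance g1 g2 D (y + D) y)" for y
  define a where "a y = birth_prob g1 g2 (y + D)" for y
  define c where "c y = (if y = 0 then 0 else 1 - birth_prob g1 g2 y)" for y
  have a_nonneg: "0 \<le> a y" for y
    using birth_prob_pos assms by (simp add: a_def less_imp_le)
  have c_nonneg: "0 \<le> c y" for y
    using birth_prob_le_1 assms by (simp add: c_def)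
  have sub_stochastic: "a y + c y < 1" for y
    using birth_prob_strict_antimono[of g1 g2 y "y + D"] birth_prob_le_1[of g1 g2 0] assms
    by (auto simp: a_def c_def)
  define N where "N = Suc (nat \<lceil>g1 / g2\<rceil>)"
  have drift: "a y \<le> c y" if "N \<le> y" for y
  proof -
    have "g1 / g2 \<le> real y" using that unfolding N_def by linarith
    then have "birth_prob g1 g2 y \<le> 1 / 2"
      using birth_prob_le_half assms by (simp add: divide_le_eq mult.commute)
    moreover have "a y \<le> birth_prob g1 g2 y"
      using birth_prob_strict_antimono[of g1 g2 y "y + D"] assms by (simp add: a_def)
    ultimately show ?thesis using that by (simp add: c_def N_def)
  qed
  obtain C where w_super: "\<And>y. a y * (real (Suc y) + C) + c y * (real (y - 1) + C) \<le> real y + C"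
    using linear_superharmonic_function[of a c N, OF a_nonneg c_nonneg sub_stochastic drift] by blast
  have w_to_top: "filterlim (\<lambda>y. real y + C) at_top sequentially"
    using filterlim_tendsto_add_at_top[OF tendsto_const filterlim_real_sequentially]
    by (simp add: add.commute)
  have "u y \<le> 0"
  proof (rule subharmonic_bounded_nonpos[OF a_nonneg c_nonneg sub_stochastic _ _ w_super w_to_top])
    show "u z \<le> 1" for z by (simp add: u_def)
    show "u z \<le> a z * u (Suc z) + c z * u (z - 1)" for z
      using measure_keep_distance_recurrence[OF assms, of z] by (simp add: u_def a_def c_def)
  qed
  then show ?thesis
    using True sets_keep_distance
    by (simp add: u_def null_sets_def emeasure_eq_measure measure_nonneg antisym)
qed


theorem lemma3p2:
  fixes g1 g2 :: real and d :: int and x0 y0 :: nat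
  assumes "g1 > 0" and "g2 > 0" and "d \<noteq> 0" and "int x0 - int y0 = d"
  shows "{q \<in> space noise_space. \<forall>n. int (bd_cocycle g1 g2 n q x0) - int (bd_cocycle g1 g2 n q y0) = d}
           \<in> sets noise_space
       \<and> measure noise_space
           {q \<in> space noise_space. \<forall>n. int (bd_cocycle g1 g2 n q x0) - int (bd_cocycle g1 g2 n q y0) = d} = 0"
proof -
  let ?S = "{q \<in> space noise_space. \<forall>n. int (bd_cocycle g1 g2 n q x0) - int (bd_cocycle g1 g2 n q y0) = d}"
  have "?S \<in> null_sets noise_space"
  proof (cases "d > 0")
    case True
    then have "int a - int b = d \<longleftrightarrow> a = b + nat d" for a b
      by auto
    then have "?S = keep_distance g1 g2 (nat d) x0 y0"
      by (simp add: keep_distance_def)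
    then show ?thesis using keep_distance_null assms True by simp
  next
    case False
    then have "int a - int b = d \<longleftrightarrow> b = a + nat (- d)" for a b
      using assms(3) by auto
    then have "?S = keep_distance g1 g2 (nat (- d)) y0 x0"
      by (simp add: keep_distance_def)
    then show ?thesis using keep_distance_null assms False by simp
  qed
  then show ?thesis by (auto simp: measure_eq_0_null_sets)
qed

end
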